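(* Let $G$ be a countable multiplicatively written Abelian group, $\phi$ a height on $G$, $\alpha\in G$, and let $K\subseteq(0,\infty)$ be uncountable such that for every $t\in K$ the infimum in the definition of $\phi_t(\alpha)$ is attained. Then $K$ is uniform if and only if there exists $(\alpha_1,\alpha_2,\ldots)\in G^\infty$ such that $\alpha=\prod_{n=1}^\infty\alpha_n$ and $\phi_t(\alpha)=(\sum_{n=1}^\infty\phi(\alpha_n)^t)^{1/t}$ for all $t\in K$.
   Context: A height on $G$ is a map $\phi:G\to[0,\infty)$ with $\phi(e)=0$ and $\phi(\beta)=\phi(\beta^{-1})$. $G^\infty$ is the set of sequences in $G$ with all but finitely many terms equal to the identity. $\mathbb R^\infty$ is the set of finitely supported real sequences, $\|\mathbf x\|_t=(\sum_n|x_n|^t)^{1/t}$. $\phi_t(\alpha)=\inf\{(\sum_n\phi(\alpha_n)^t)^{1/t}:(\alpha_n)\in G^\infty,\ \prod_n\alpha_n=\alpha\}$, and the infimum is attained if some such sequence achieves it. A set $K\subseteq(0,\infty)$ is uniform if there exists $\mathbf x\in\mathbb R^\infty$ with $\phi_t(\alpha)=\|\mathbf x\|_t$ for all $t\in K$. *)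

theory Defs
  imports "HOL-Algebra.Algebra" "HOL-Library.Countable_Set"
begin

definition is_height :: "('a, 'b) monoid_scheme \<Rightarrow> ('a \<Rightarrow> real) \<Rightarrow> bool" where
  "is_height G \<phi> \<longleftrightarrow> (\<forall>b\<in>carrier G. \<phi> b \<ge> 0) \<and> \<phi> \<one>\<^bsub>G\<^esub> = 0
     \<and> (\<forall>b\<in>carrier G. \<phi> b = \<phi> (inv\<^bsub>G\<^esub> b))"

definition fin_seqs :: "('a, 'b) monoid_scheme \<Rightarrow> (nat \<Rightarrow> 'a) set" where
  "fin_seqs G = {f. (\<forall>n. f n \<in> carrier G) \<and> finite {n. f n \<noteq> \<one>\<^bsub>G\<^esub>}}"

definition seq_prod :: "('a, 'b) monoid_scheme \<Rightarrow> (nat \<Rightarrow> 'a) \<Rightarrow> 'a" where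
  "seq_prod G f = finprod G f {n. f n \<noteq> \<one>\<^bsub>G\<^esub>}"

text \<open>(sum_n phi(a_n)^t)^(1/t) for a sequence in G^infinity (terms equal to the
  identity contribute phi(1)^t = 0).\<close>
definition seq_val :: "('a, 'b) monoid_scheme \<Rightarrow> ('a \<Rightarrow> real) \<Rightarrow> real \<Rightarrow> (nat \<Rightarrow> 'a) \<Rightarrow> real" where
  "seq_val G \<phi> t f = (\<Sum>n\<in>{n. f n \<noteq> \<one>\<^bsub>G\<^esub>}. \<phi> (f n) powr t) powr (1 / t)"

definition phi_t :: "('a, 'b) monoid_scheme \<Rightarrow> ('a \<Rightarrow> real) \<Rightarrow> real \<Rightarrow> 'a \<Rightarrow> real" where
  "phi_t G \<phi> t a = Inf {seq_val G \<phi> t f | f. f \<in> fin_seqs G \<and> seq_prod G f = a}"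

definition inf_attained :: "('a, 'b) monoid_scheme \<Rightarrow> ('a \<Rightarrow> real) \<Rightarrow> real \<Rightarrow> 'a \<Rightarrow> bool" where
  "inf_attained G \<phi> t a \<longleftrightarrow>
     (\<exists>f\<in>fin_seqs G. seq_prod G f = a \<and> seq_val G \<phi> t f = phi_t G \<phi> t a)"

definition fin_real_seqs :: "(nat \<Rightarrow> real) set" where
  "fin_real_seqs = {x. finite {n. x n \<noteq> 0}}"

definition tnorm :: "real \<Rightarrow> (nat \<Rightarrow> real) \<Rightarrow> real" where
  "tnorm t x = (\<Sum>n\<in>{n. x n \<noteq> 0}. \<bar>x n\<bar> powr t) powr (1 / t)"

definition uniform_set :: "('a, 'b) monoid_scheme \<Rightarrow> ('a \<Rightarrow> real) \<Rightarrow> 'a \<Rightarrow> real set \<Rightarrow> bool" where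
  "uniform_set G \<phi> a K \<longleftrightarrow> (\<exists>x\<in>fin_real_seqs. \<forall>t\<in>K. phi_t G \<phi> t a = tnorm t x)"

end

theory Submission
  imports Defs
begin

text \<open>
  The backward direction is immediate: a sequence (\<alpha>_n) in G^\<infinity> gives the
  real sequence x_n = \<phi>(\<alpha>_n) in \<real>^\<infinity> with \<parallel>x\<parallel>_t equal to its value at every t.
  For the forward direction, choose for each t \<in> K a sequence attaining \<phi>_t(\<alpha>).  Since G is
  countable, so is G^\<infinity>; as K is uncountable, one sequence (\<alpha>_n) is chosen for infinitely
  many t.  At these t the t-norms of x (witnessing uniformity) and of (\<phi>(\<alpha>_n)) agree.
  Two finite families of nonnegative reals whose power sums agree at infinitely many exponents
  have the same multiset of positive values, because the functions t \<mapsto> v^t for distinct v > 0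
  are linearly independent; this is shown by Rolle's theorem, counting zeros of exponential sums.
  Hence the two t-norms agree for every t > 0, in particular on all of K.
\<close>

lemma rolle_zero_count:
  fixes h h' :: "real \<Rightarrow> real"
  assumes der: "\<And>x. (h has_real_derivative h' x) (at x)"
  shows "finite Z \<Longrightarrow> card Z = Suc n \<Longrightarrow> (\<forall>z\<in>Z. h z = 0) \<Longrightarrow>
    \<exists>Z'. finite Z' \<and> card Z' = n \<and> Z' \<subseteq> {..<Max Z} \<and> (\<forall>z\<in>Z'. h' z = 0)"
proof (induction n arbitrary: Z)
  case 0
  then show ?case by auto
next
  case (Suc n)
  define m where "m = Max Z"
  define Z0 where "Z0 = Z - {m}"
  have mZ: "m \<in> Z" using Suc.prems Max_in m_def by fastforce
  have Z0: "finite Z0" "card Z0 = Suc n" "\<forall>z\<in>Z0. h z = 0"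
    using Suc.prems mZ by (auto simp: Z0_def)
  obtain Z' where Z': "finite Z'" "card Z' = n" "Z' \<subseteq> {..<Max Z0}" "\<forall>z\<in>Z'. h' z = 0"
    using Suc.IH[OF Z0] by blast
  have m0: "Max Z0 \<in> Z0" using Z0 Max_in by fastforce
  have lt: "Max Z0 < m"
    using m0 Suc.prems(1) m_def Z0_def by (metis DiffD1 DiffD2 Max_ge insertI1 order_le_less)
  have "\<exists>w. Max Z0 < w \<and> w < m \<and> DERIV h w :> 0"
  proof (rule Rolle[OF lt])
    show "h (Max Z0) = h m" using Z0(3) m0 mZ Suc.prems(3) by auto
    show "continuous_on {Max Z0..m} h"
      using der by (meson DERIV_isCont continuous_at_imp_continuous_on)
    show "\<And>x. Max Z0 < x \<Longrightarrow> x < m \<Longrightarrow> h differentiable at x"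
      using der real_differentiable_def by blast
  qed
  then obtain w where w: "Max Z0 < w" "w < m" "h' w = 0"
    using DERIV_unique[OF der] by blast
  have "w \<notin> Z'" using Z'(3) w(1) by auto
  then show ?case
    using Z' w lt by (intro exI[of _ "insert w Z'"]) (auto simp: m_def)
qed

text \<open>Induction on the number of
  frequencies: dividing by e^(l_0 t) and differentiating removes the term for l_0.\<close>
lemma exp_sum_vanishing:
  fixes c :: "real \<Rightarrow> real"
  shows "finite L \<Longrightarrow> finite Z \<Longrightarrow> card L \<le> card Z \<Longrightarrow>
    (\<forall>t\<in>Z. (\<Sum>l\<in>L. c l * exp (l * t)) = 0) \<Longrightarrow> \<forall>l\<in>L. c l = 0"
proof (induction L arbitrary: c Z rule: finite_induct)
  case empty
  then show ?case by simp
next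
  case (insert l0 L)
  obtain n where n: "card Z = Suc n" and nL: "card L \<le> n"
    using insert by (metis card_insert_disjoint not_less_eq_eq Suc_le_D)
  define h where "h t = (\<Sum>l\<in>insert l0 L. c l * exp ((l - l0) * t))" for t
  define h' where "h' t = (\<Sum>l\<in>L. c l * (l - l0) * exp ((l - l0) * t))" for t
  have h_split: "h t = c l0 + (\<Sum>l\<in>L. c l * exp ((l - l0) * t))" for t
    using insert(1,2) by (simp add: h_def)
  have der: "(h has_real_derivative h' x) (at x)" for x
    unfolding h_split[abs_def] h'_def by (auto intro!: derivative_eq_intros sum.cong simp: algebra_simps)
  have h_scaled: "h t = exp (- l0 * t) * (\<Sum>l\<in>insert l0 L. c l * exp (l * t))" for t
    unfolding h_def sum_distrib_left
    by (rule sum.cong) (auto simp: algebra_simps exp_add[symmetric])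
  have h'_scaled: "h' t = exp (- l0 * t) * (\<Sum>l\<in>L. (c l * (l - l0)) * exp (l * t))" for t
    unfolding h'_def sum_distrib_left
    by (rule sum.cong) (auto simp: algebra_simps exp_add[symmetric])
  have "\<forall>z\<in>Z. h z = 0" using insert(6) h_scaled by simp
  then obtain Z' where Z': "finite Z'" "card Z' = n" "\<forall>z\<in>Z'. h' z = 0"
    using rolle_zero_count[OF der insert(4) n] by blast
  then have "\<forall>t\<in>Z'. (\<Sum>l\<in>L. (c l * (l - l0)) * exp (l * t)) = 0"
    using h'_scaled by simp
  then have "\<forall>l\<in>L. c l * (l - l0) = 0"
    using insert.IH[OF Z'(1), of "\<lambda>l. c l * (l - l0)"] Z'(2) nL by simp
  then have cL: "\<forall>l\<in>L. c l = 0" using insert(2) by auto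
  obtain z where z: "z \<in> Z" using n by fastforce
  then have "(\<Sum>l\<in>insert l0 L. c l * exp (l * z)) = 0" using insert(6) by blast
  then have "c l0 * exp (l0 * z) = 0" using insert(1,2) cL by simp
  then show ?case using cL by simp
qed

text \<open>The same for generalised polynomials \<Sum>_v c_v v^t with distinct positive bases v,
  via the substitution v = e^l.\<close>
lemma powr_sum_vanishing:
  fixes c :: "real \<Rightarrow> real"
  assumes "finite V" "V \<subseteq> {0<..}" "finite Z" "card V \<le> card Z"
    and "\<forall>t\<in>Z. (\<Sum>v\<in>V. c v * v powr t) = 0"
  shows "\<forall>v\<in>V. c v = 0"
proof -
  have inj: "inj_on ln V" using assms(2) by (intro inj_onI) (auto dest: ln_inj_iff[THEN iffD1])
  have substitution: "(\<Sum>l\<in>ln ` V. c (exp l) * exp (l * t)) = (\<Sum>v\<in>V. c v * v powr t)" for t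
    using assms(2) by (subst sum.reindex[OF inj]) (auto intro!: sum.cong simp: powr_def mult.commute)
  have "\<forall>l\<in>ln ` V. c (exp l) = 0"
    by (rule exp_sum_vanishing) (use assms substitution card_image[OF inj] in auto)
  then show ?thesis using assms(2) by (metis exp_ln greaterThan_iff image_eqI subsetD)
qed

text \<open>A power sum of nonnegative values, grouped by value: only the multiplicities of the
  positive values matter (zero terms vanish since 0 powr t = 0).\<close>
lemma sum_powr_by_values:
  fixes g :: "'i \<Rightarrow> real"
  assumes "finite S" "finite V" "g ` S \<inter> {0<..} \<subseteq> V" "\<forall>n\<in>S. g n \<ge> 0"
  shows "(\<Sum>n\<in>S. g n powr t) = (\<Sum>v\<in>V. real (card {n\<in>S. g n = v}) * v powr t)"
proof -
  have "(\<Sum>v\<in>V. real (card {n\<in>S. g n = v}) * v powr t)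
      = (\<Sum>v\<in>V. \<Sum>n\<in>{n\<in>{n\<in>S. g n \<in> V}. g n = v}. g n powr t)"
  proof (rule sum.cong)
    fix v assume v: "v \<in> V"
    then have "{n\<in>{n\<in>S. g n \<in> V}. g n = v} = {n\<in>S. g n = v}" by auto
    then show "real (card {n\<in>S. g n = v}) * v powr t
        = (\<Sum>n\<in>{n\<in>{n\<in>S. g n \<in> V}. g n = v}. g n powr t)" by simp
  qed simp
  also have "\<dots> = (\<Sum>n\<in>{n\<in>S. g n \<in> V}. g n powr t)"
    by (rule sum.group) (use assms in auto)
  also have "\<dots> = (\<Sum>n\<in>S. g n powr t)"
  proof (rule sum.mono_neutral_left)
    show "\<forall>i\<in>S - {n \<in> S. g n \<in> V}. g i powr t = 0"
      using assms(3,4) by force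
  qed (use assms in auto)
  finally show ?thesis by simp
qed

text \<open>Power sums of two finite families of nonnegative reals that agree at infinitely many
  exponents agree at every exponent: the difference is a generalised polynomial in the common
  positive values, with infinitely many zeros, hence with zero coefficients.\<close>
lemma power_sums_agree:
  fixes g1 :: "'i \<Rightarrow> real" and g2 :: "'j \<Rightarrow> real"
  assumes "finite S1" "finite S2" "\<forall>n\<in>S1. g1 n \<ge> 0" "\<forall>n\<in>S2. g2 n \<ge> 0"
    and "infinite Z" "\<forall>t\<in>Z. (\<Sum>n\<in>S1. g1 n powr t) = (\<Sum>n\<in>S2. g2 n powr t)"
  shows "(\<Sum>n\<in>S1. g1 n powr t) = (\<Sum>n\<in>S2. g2 n powr t)"
proof -
  define V where "V = (g1 ` S1 \<union> g2 ` S2) \<inter> {0<..}"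
  define c where "c v = real (card {n\<in>S1. g1 n = v}) - real (card {n\<in>S2. g2 n = v})" for v
  have V: "finite V" "V \<subseteq> {0<..}" using assms(1,2) by (auto simp: V_def)
  have diff: "(\<Sum>n\<in>S1. g1 n powr s) - (\<Sum>n\<in>S2. g2 n powr s) = (\<Sum>v\<in>V. c v * v powr s)" for s
  proof -
    have "(\<Sum>n\<in>S1. g1 n powr s) = (\<Sum>v\<in>V. real (card {n\<in>S1. g1 n = v}) * v powr s)"
      by (rule sum_powr_by_values) (use assms V in \<open>auto simp: V_def\<close>)
    moreover have "(\<Sum>n\<in>S2. g2 n powr s) = (\<Sum>v\<in>V. real (card {n\<in>S2. g2 n = v}) * v powr s)"
      by (rule sum_powr_by_values) (use assms V in \<open>auto simp: V_def\<close>)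
    ultimately show ?thesis by (simp add: c_def left_diff_distrib sum_subtractf)
  qed
  obtain Z' where Z': "finite Z'" "card Z' = card V" "Z' \<subseteq> Z"
    using infinite_arbitrarily_large[OF assms(5)] by blast
  have "\<forall>t\<in>Z'. (\<Sum>v\<in>V. c v * v powr t) = 0"
    using Z'(3) assms(6) diff by (metis diff_self subsetD)
  then have "\<forall>v\<in>V. c v = 0"
    using powr_sum_vanishing[OF V Z'(1)] Z'(2) by simp
  then show ?thesis using diff[of t] by simp
qed

lemma powr_inverse_inj:
  fixes A B t :: real
  assumes "A \<ge> 0" "B \<ge> 0" "t > 0" "A powr (1/t) = B powr (1/t)"
  shows "A = B"
proof -
  have "(A powr (1/t)) powr t = (B powr (1/t)) powr t" using assms(4) by simp
  then show ?thesis using assms(1-3) by (simp add: powr_powr)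
qed

lemma tnorm_agree:
  assumes "x \<in> fin_real_seqs" "y \<in> fin_real_seqs"
    and "infinite Z" "Z \<subseteq> {0<..}" "\<forall>s\<in>Z. tnorm s x = tnorm s y" "t > 0"
  shows "tnorm t x = tnorm t y"
proof -
  define P where "P (z :: nat \<Rightarrow> real) s = (\<Sum>n\<in>{n. z n \<noteq> 0}. \<bar>z n\<bar> powr s)" for z s
  have tnorm_P: "tnorm s z = P z s powr (1/s)" for s z by (simp add: tnorm_def P_def)
  have "P x s = P y s" if "s \<in> Z" for s
  proof (rule powr_inverse_inj)
    show "P x s \<ge> 0" "P y s \<ge> 0" unfolding P_def by (auto intro: sum_nonneg)
    show "s > 0" using assms(4) that by auto
    show "P x s powr (1/s) = P y s powr (1/s)" using assms(5) that by (simp add: tnorm_P)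
  qed
  then have "P x t = P y t"
    unfolding P_def using assms(1-3) by (intro power_sums_agree) (auto simp: fin_real_seqs_def)
  then show ?thesis by (simp add: tnorm_P)
qed

text \<open>G^\<infinity> is countable when G is: encode a sequence by the list of its terms up to a
  bound on its support.\<close>
lemma countable_fin_seqs:
  assumes "countable (carrier G)"
  shows "countable (fin_seqs G)"
proof -
  define k where "k f = (SOME k. {n. f n \<noteq> \<one>\<^bsub>G\<^esub>} \<subseteq> {..<k})" for f :: "nat \<Rightarrow> 'a"
  have k: "{n. f n \<noteq> \<one>\<^bsub>G\<^esub>} \<subseteq> {..<k f}" if "f \<in> fin_seqs G" for f
    unfolding k_def by (rule someI_ex) (use that finite_nat_bounded in \<open>auto simp: fin_seqs_def\<close>)
  define enc where "enc f = map f [0..<k f]" for f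
  have "inj_on enc (fin_seqs G)"
  proof (rule inj_onI)
    fix f g assume f: "f \<in> fin_seqs G" and g: "g \<in> fin_seqs G" and e: "enc f = enc g"
    then have len: "k f = k g" unfolding enc_def by (metis length_map length_upt minus_nat.diff_0)
    show "f = g"
    proof
      fix n show "f n = g n"
      proof (cases "n < k f")
        case True
        then show ?thesis using e len unfolding enc_def by (metis add_0 diff_zero nth_map_upt)
      next
        case False
        then have "f n = \<one>\<^bsub>G\<^esub>" and "g n = \<one>\<^bsub>G\<^esub>"
          using k[OF f] k[OF g] len by auto
        then show ?thesis by simp
      qed
    qed
  qed
  moreover have "enc ` fin_seqs G \<subseteq> lists (carrier G)"
    by (auto simp: enc_def fin_seqs_def)
  then have "countable (enc ` fin_seqs G)"
    using assms countable_lists countable_subset by blast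
  ultimately show ?thesis using countable_image_inj_on by blast
qed

lemma uncountable_fibre:
  assumes "uncountable A" "countable (F ` A)"
  shows "\<exists>a\<in>A. uncountable {a'\<in>A. F a' = F a}"
proof (rule ccontr)
  assume "\<not> ?thesis"
  then have "countable (\<Union>b\<in>F ` A. {a'\<in>A. F a' = b})"
    using assms(2) by (intro countable_UN) auto
  moreover have "(\<Union>b\<in>F ` A. {a'\<in>A. F a' = b}) = A" by auto
  ultimately show False using assms(1) by simp
qed

lemma seq_val_as_tnorm:
  assumes "is_height G \<phi>" "f \<in> fin_seqs G"
  shows "(\<lambda>n. \<phi> (f n)) \<in> fin_real_seqs" and "seq_val G \<phi> t f = tnorm t (\<lambda>n. \<phi> (f n))"
proof -
  have nonneg: "\<And>n. \<phi> (f n) \<ge> 0" and one: "\<phi> \<one>\<^bsub>G\<^esub> = 0"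
    using assms by (auto simp: is_height_def fin_seqs_def)
  have fin: "finite {n. f n \<noteq> \<one>\<^bsub>G\<^esub>}" using assms(2) by (simp add: fin_seqs_def)
  have sub: "{n. \<phi> (f n) \<noteq> 0} \<subseteq> {n. f n \<noteq> \<one>\<^bsub>G\<^esub>}" using one by auto
  show "(\<lambda>n. \<phi> (f n)) \<in> fin_real_seqs"
    using finite_subset[OF sub fin] by (simp add: fin_real_seqs_def)
  have "(\<Sum>n\<in>{n. \<phi> (f n) \<noteq> 0}. \<bar>\<phi> (f n)\<bar> powr t) = (\<Sum>n\<in>{n. \<phi> (f n) \<noteq> 0}. \<phi> (f n) powr t)"
    using nonneg by simp
  also have "\<dots> = (\<Sum>n\<in>{n. f n \<noteq> \<one>\<^bsub>G\<^esub>}. \<phi> (f n) powr t)"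
    by (rule sum.mono_neutral_left[OF fin sub]) auto
  finally show "seq_val G \<phi> t f = tnorm t (\<lambda>n. \<phi> (f n))"
    by (simp add: tnorm_def seq_val_def)
qed

theorem lemma3p4:
  fixes G (structure) and \<phi> :: "'a \<Rightarrow> real" and \<alpha> :: 'a and K :: "real set"
  assumes "comm_group G" and "countable (carrier G)"
    and "is_height G \<phi>" and "\<alpha> \<in> carrier G"
    and "K \<subseteq> {0<..}" and "uncountable K"
    and "\<forall>t\<in>K. inf_attained G \<phi> t \<alpha>"
  shows "uniform_set G \<phi> \<alpha> K \<longleftrightarrow>
    (\<exists>f\<in>fin_seqs G. seq_prod G f = \<alpha> \<and> (\<forall>t\<in>K. phi_t G \<phi> t \<alpha> = seq_val G \<phi> t f))"
proof
  assume "uniform_set G \<phi> \<alpha> K"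
  then obtain x where x: "x \<in> fin_real_seqs" "\<forall>t\<in>K. phi_t G \<phi> t \<alpha> = tnorm t x"
    by (auto simp: uniform_set_def)
  obtain F where F: "\<forall>t\<in>K. F t \<in> fin_seqs G \<and> seq_prod G (F t) = \<alpha>
      \<and> seq_val G \<phi> t (F t) = phi_t G \<phi> t \<alpha>"
    using assms(7) unfolding inf_attained_def by metis
  have "countable (F ` K)"
    using countable_fin_seqs[OF assms(2)] F by (auto intro: countable_subset)
  then obtain t0 where t0: "t0 \<in> K" and unc: "uncountable {t\<in>K. F t = F t0}"
    using uncountable_fibre[OF assms(6)] by blast
  define f where "f = F t0"
  have f: "f \<in> fin_seqs G" "seq_prod G f = \<alpha>" using F t0 by (auto simp: f_def)
  note y = seq_val_as_tnorm[OF assms(3) f(1)]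
  have "tnorm t x = tnorm t (\<lambda>n. \<phi> (f n))" if "t \<in> K" for t
  proof (rule tnorm_agree[OF x(1) y(1)])
    show "infinite {t\<in>K. F t = F t0}" using unc countable_finite by blast
    show "\<forall>s\<in>{t\<in>K. F t = F t0}. tnorm s x = tnorm s (\<lambda>n. \<phi> (f n))"
      using F x(2) y(2) by (auto simp: f_def)
  qed (use assms(5) that in auto)
  then show "\<exists>f\<in>fin_seqs G. seq_prod G f = \<alpha> \<and> (\<forall>t\<in>K. phi_t G \<phi> t \<alpha> = seq_val G \<phi> t f)"
    using f x(2) y(2) by metis
next
  assume "\<exists>f\<in>fin_seqs G. seq_prod G f = \<alpha> \<and> (\<forall>t\<in>K. phi_t G \<phi> t \<alpha> = seq_val G \<phi> t f)"
  then obtain f where "f \<in> fin_seqs G" "\<forall>t\<in>K. phi_t G \<phi> t \<alpha> = seq_val G \<phi> t f" by blast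
  then show "uniform_set G \<phi> \<alpha> K"
    using seq_val_as_tnorm[OF assms(3)] unfolding uniform_set_def by metis
qed

end
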